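(* For any p-string $T$ of length $n$, the parameterized suffix tray $\mathsf{PSTray}(T)$ occupies $O(n)$ space (in machine words).
   Context: $\Sigma$ (static alphabet) and $\Pi$ (parameterized alphabet) are disjoint ordered alphabets, every character of $\Pi$ being smaller than every character of $\Sigma$; a p-string is a string over $\Sigma\cup\Pi$. $T$ ends with $\$\in\Sigma$, occurring nowhere else and larger than all other characters. $\Pi_T$, $\Sigma_T$ are the sets of characters of $\Pi$, $\Sigma$ occurring in $T$; $\pi=|\Pi_T|$, $\sigma=|\Sigma_T|$. For $x\in\Pi_T\cup\Sigma_T$, $\mathrm{rank}(x)$ is the rank of $x$ in $\Pi_T\cup\Sigma_T$ (so ranks lie in $\{1,\dots,\sigma+\pi\}$). Two p-strings $x,y$ of equal length p-match ($x\approx y$) if there is a bijection $f$ on $\Sigma\cup\Pi$ which is the identity on $\Sigma$ with $x[i]=f(y[i])$ for all $i$. $\mathrm{spe}(w)$ is the lexicographically smallest p-string p-matching $w$. $\mathrm{prev}(w)$ is the string of length $|w|$ with $\mathrm{prev}(w)[i]=w[i]$ if $w[i]\in\Sigma$, $0$ if $w[i]\in\Pi$ does not occur in $w[1..i-1]$, and otherwise $i-j$ for the largest $j<i$ with $w[j]=w[i]$. $\mathsf{PSTree}(T)$ is the compact trie of $\{\mathrm{prev}(T[i..]) : 1\le i\le |T|\}$ with leaves in lexicographic order. $\mathsf{PSA}(T)$ is the array with $\mathsf{PSA}(T)[i]=j$ iff $\mathrm{prev}(T[j..])$ is the $i$-th lexicographically smallest among $\{\mathrm{prev}(T[k..])\}$;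 $\mathsf{PLCP}(T)[1]=0$ and $\mathsf{PLCP}(T)[i]$ ($i\ge2$) is the length of the longest common prefix of $\mathrm{prev}(T[\mathsf{PSA}(T)[i-1]..])$ and $\mathrm{prev}(T[\mathsf{PSA}(T)[i]..])$. A node of $\mathsf{PSTree}(T)$ is a p-node if its subtree has at least $\max\{\sigma,\pi\}$ leaves, and a branching p-node if moreover at least two of its children are p-nodes. For a branching p-node $\mathrm{prev}(v)$ ($v$ a substring of $T$), its p-array $A(\mathrm{prev}(v))$ has length $\sigma+\pi$, and for each $x\in\Sigma_T\cup\Pi_T$ the entry $A(\mathrm{prev}(v))[\mathrm{rank}(x)]$ is a pointer to the child $u$ of $\mathrm{prev}(v)$ such that $\mathrm{prev}(\mathrm{spe}(v)x)$ is a prefix of (the string of) $u$, or nil if no such child exists. $\mathsf{PSTray}(T)$ consists of $\mathsf{PSA}(T)$, $\mathsf{PLCP}(T)$, and $\mathsf{PSTree}(T)$ with each branching p-node augmented by its p-array. *)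

theory Defs
  imports Main "HOL-Library.List_Lexorder" "HOL-Library.Product_Lexorder" "HOL-Library.Sublist"
begin

text \<open>Characters of p-strings: (False, k) is the k-th parameterized character (in Pi),
  (True, k) is the k-th static character (in Sigma).  With the lexicographic order on
  bool x nat every character of Pi is smaller than every character of Sigma.\<close>
type_synonym pchar = "bool \<times> nat"

abbreviation is_static :: "pchar \<Rightarrow> bool" where "is_static c \<equiv> fst c"

definition valid_pstring :: "pchar list \<Rightarrow> bool" where
  "valid_pstring T \<longleftrightarrow> T \<noteq> [] \<and> is_static (last T) \<and> (\<forall>i < length T - 1. T ! i < last T)"

text \<open>prev-encoding; an entry is either a static character (True, s) or a number (False, k),
  numbers being smaller than static characters.\<close>
definition prev :: "pchar list \<Rightarrow> pchar list" where
  "prev w = map (\<lambda>i. if is_static (w ! i) then w ! i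
                     else if w ! i \<notin> set (take i w) then (False, 0)
                     else (False, i - (GREATEST j. j < i \<and> w ! j = w ! i))) [0..<length w]"

definition pmatch :: "pchar list \<Rightarrow> pchar list \<Rightarrow> bool" where
  "pmatch x y \<longleftrightarrow> length x = length y \<and>
     (\<exists>f. bij f \<and> (\<forall>c. is_static c \<longrightarrow> f c = c) \<and> (\<forall>i < length x. x ! i = f (y ! i)))"

definition spe :: "pchar list \<Rightarrow> pchar list" where
  "spe w = (LEAST x. pmatch x w)"

text \<open>prev of the suffix T[i..] (1-indexed, 1 <= i <= |T|).\<close>
definition psuf :: "pchar list \<Rightarrow> nat \<Rightarrow> pchar list" where
  "psuf T i = prev (drop (i - 1) T)"

definition psufs :: "pchar list \<Rightarrow> pchar list set" where
  "psufs T = psuf T ` {1..length T}"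

definition PSA :: "pchar list \<Rightarrow> nat list" where
  "PSA T = sort_key (psuf T) [1..<length T + 1]"

fun lcp :: "'a list \<Rightarrow> 'a list \<Rightarrow> nat" where
  "lcp (x # xs) (y # ys) = (if x = y then Suc (lcp xs ys) else 0)"
| "lcp _ _ = 0"

definition PLCP :: "pchar list \<Rightarrow> nat list" where
  "PLCP T = map (\<lambda>i. if i = 0 then 0
                     else lcp (psuf T (PSA T ! (i - 1))) (psuf T (PSA T ! i))) [0..<length T]"

text \<open>Nodes of PSTree(T), the compact trie of psufs T, identified with their strings:
  the root, the leaves, and the branching internal nodes.\<close>
definition PSTree_nodes :: "pchar list \<Rightarrow> pchar list set" where
  "PSTree_nodes T = {[]} \<union> psufs T \<union>
     {u. \<exists>a b. a \<noteq> b \<and> (\<exists>s\<in>psufs T. prefix (u @ [a]) s) \<and> (\<exists>s\<in>psufs T. prefix (u @ [b]) s)}"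

definition children :: "pchar list \<Rightarrow> pchar list \<Rightarrow> pchar list set" where
  "children T u = {w \<in> PSTree_nodes T. strict_prefix u w \<and>
      \<not> (\<exists>z \<in> PSTree_nodes T. strict_prefix u z \<and> strict_prefix z w)}"

definition leaf_count :: "pchar list \<Rightarrow> pchar list \<Rightarrow> nat" where
  "leaf_count T u = card {s \<in> psufs T. prefix u s}"

definition sigmaT :: "pchar list \<Rightarrow> nat" where
  "sigmaT T = card {c \<in> set T. is_static c}"

definition piT :: "pchar list \<Rightarrow> nat" where
  "piT T = card {c \<in> set T. \<not> is_static c}"

definition is_pnode :: "pchar list \<Rightarrow> pchar list \<Rightarrow> bool" where
  "is_pnode T u \<longleftrightarrow> u \<in> PSTree_nodes T \<and> leaf_count T u \<ge> max (sigmaT T) (piT T)"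

definition is_branching_pnode :: "pchar list \<Rightarrow> pchar list \<Rightarrow> bool" where
  "is_branching_pnode T u \<longleftrightarrow> is_pnode T u \<and> 2 \<le> card {w \<in> children T u. is_pnode T w}"

text \<open>Characters of T in rank order: the list entry at position rank(x) - 1 corresponds to x.\<close>
definition alphabet :: "pchar list \<Rightarrow> pchar list" where
  "alphabet T = sorted_list_of_set (set T)"

text \<open>p-array of node u = prev(v); entries are pointers to children (Some node) or nil (None).\<close>
definition parray :: "pchar list \<Rightarrow> pchar list \<Rightarrow> pchar list option list" where
  "parray T u = map (\<lambda>x.
      let v = (SOME v. (\<exists>i j. v = take j (drop i T)) \<and> prev v = u);
          key = prev (spe v @ [x])
      in if \<exists>w \<in> children T u. prefix key w
         then Some (THE w. w \<in> children T u \<and> prefix key w) else None) (alphabet T)"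

text \<open>Space of PSTray(T) in machine words: one word per entry of PSA and PLCP, one
  (constant) record per node of the tree, and one word per p-array entry of each branching
  p-node.\<close>
definition PSTray_space :: "pchar list \<Rightarrow> nat" where
  "PSTray_space T = length (PSA T) + length (PLCP T) + card (PSTree_nodes T)
     + (\<Sum>u \<in> {u. is_branching_pnode T u}. length (parray T u))"

end

theory Submission
  imports Defs
begin

text \<open>Call u an m-fork of a finite set S of strings if two distinct one-letter extensions
  of u are each a prefix of at least m strings of S.  There are at most |S|/m such forks: by
  induction along the trie, a set with k > 0 forks has at least (k+1)m elements, since a fork has
  at least two heavy children and a non-fork with forks below it still has one.  The nodes of
  PSTree(T) are the root, the at most n leaves and the 1-forks of the encoded suffixes, so there
  are at most 2n+1 of them.  Branching p-nodes are max(sigma,pi)-forks, so there are at most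
  n / max(sigma,pi) of them, each carrying a p-array of length sigma + pi \<le> 2 max(sigma,pi).\<close>

definition below :: "'a list set \<Rightarrow> 'a list \<Rightarrow> 'a list set" where
  "below S u = {s \<in> S. prefix u s}"

definition residual :: "'a \<Rightarrow> 'a list set \<Rightarrow> 'a list set" where
  "residual c S = {t. c # t \<in> S}"

definition heavy_forks :: "nat \<Rightarrow> 'a list set \<Rightarrow> 'a list set" where
  "heavy_forks m S =
     {u. \<exists>a b. a \<noteq> b \<and> m \<le> card (below S (u @ [a])) \<and> m \<le> card (below S (u @ [b]))}"

lemma below_Nil [simp]: "below S [] = S"
  by (simp add: below_def)

lemma below_Cons: "below S (c # v) = Cons c ` below (residual c S) v"
  unfolding below_def residual_def by (auto simp: image_iff prefix_def)

lemma card_below_Cons: "card (below S (c # v)) = card (below (residual c S) v)"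
  unfolding below_Cons by (simp add: card_image)

lemma finite_below: "finite S \<Longrightarrow> finite (below S u)"
  by (simp add: below_def)

lemma finite_residual: "finite S \<Longrightarrow> finite (residual c S)"
  unfolding residual_def by (rule finite_vimageI[where h = "Cons c", unfolded vimage_def]) auto

lemma sum_card_residual_le:
  assumes "finite S"
  shows "(\<Sum>c\<in>C. card (residual c S)) \<le> card S"
proof (cases "finite C")
  case True
  have "(\<Sum>c\<in>C. card (residual c S)) = card (\<Union>c\<in>C. Cons c ` residual c S)"
    by (subst card_UN_disjoint) (auto simp: True finite_residual[OF assms] card_image)
  also have "\<dots> \<le> card S"
    by (rule card_mono[OF assms]) (auto simp: residual_def)
  finally show ?thesis .
qed simp

lemma Cons_in_heavy_forks_iff: "c # v \<in> heavy_forks m S \<longleftrightarrow> v \<in> heavy_forks m (residual c S)"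
  unfolding heavy_forks_def by (simp add: card_below_Cons[where v = "_ @ _", simplified])

lemma Nil_in_heavy_forks_iff:
  "[] \<in> heavy_forks m S \<longleftrightarrow>
     (\<exists>a b. a \<noteq> b \<and> m \<le> card (residual a S) \<and> m \<le> card (residual b S))"
  unfolding heavy_forks_def by (simp add: card_below_Cons)

lemma card_ge_double_if_heavy_fork:
  assumes "finite S" "u \<in> heavy_forks m S"
  shows "2 * m \<le> card S"
proof -
  obtain a b where ab: "a \<noteq> b" "m \<le> card (below S (u @ [a]))" "m \<le> card (below S (u @ [b]))"
    using assms(2) unfolding heavy_forks_def by blast
  have disj: "below S (u @ [a]) \<inter> below S (u @ [b]) = {}"
    using ab(1) unfolding below_def by (auto dest: prefix_same_cases)
  have "card (below S (u @ [a])) + card (below S (u @ [b])) = card (below S (u @ [a]) \<union> below S (u @ [b]))"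
    by (rule card_Un_disjoint[symmetric]) (use assms(1) disj in \<open>auto simp: finite_below\<close>)
  also have "\<dots> \<le> card S"
    by (rule card_mono[OF assms(1)]) (auto simp: below_def)
  finally show ?thesis using ab by simp
qed

lemma heavy_forks_subset_prefixes:
  assumes "0 < m"
  shows "heavy_forks m S \<subseteq> (\<Union>s\<in>S. set (prefixes s))"
proof
  fix u assume "u \<in> heavy_forks m S"
  then obtain a where "m \<le> card (below S (u @ [a]))"
    unfolding heavy_forks_def by blast
  with assms obtain s where "s \<in> S" "prefix (u @ [a]) s"
    unfolding below_def by (metis (no_types, lifting) card.empty empty_Collect_eq not_le)
  then have "prefix u s"
    using prefix_order.trans prefixI by blast
  then show "u \<in> (\<Union>s\<in>S. set (prefixes s))"
    using \<open>s \<in> S\<close> by auto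
qed

lemma finite_heavy_forks: "finite S \<Longrightarrow> 0 < m \<Longrightarrow> finite (heavy_forks m S)"
  by (rule finite_subset[OF heavy_forks_subset_prefixes]) auto

lemma heavy_forks_decompose:
  assumes "finite S" "0 < m"
  shows "heavy_forks m S - {[]} =
           (\<Union>c\<in>{c. m \<le> card (residual c S)}. Cons c ` heavy_forks m (residual c S))"
proof (rule set_eqI)
  fix u
  show "u \<in> heavy_forks m S - {[]} \<longleftrightarrow>
          u \<in> (\<Union>c\<in>{c. m \<le> card (residual c S)}. Cons c ` heavy_forks m (residual c S))"
  proof (cases u)
    case (Cons c v)
    have "v \<in> heavy_forks m (residual c S) \<Longrightarrow> m \<le> card (residual c S)"
      using card_ge_double_if_heavy_fork[OF finite_residual[OF assms(1)]] by fastforce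
    then show ?thesis using Cons by (auto simp: Cons_in_heavy_forks_iff)
  qed auto
qed

lemma finite_heavy_residuals:
  assumes "finite S" "0 < m"
  shows "finite {c. m \<le> card (residual c S)}"
proof (rule finite_subset[of _ "hd ` S"])
  show "{c. m \<le> card (residual c S)} \<subseteq> hd ` S"
  proof
    fix c assume "c \<in> {c. m \<le> card (residual c S)}"
    then obtain t where "c # t \<in> S"
      using assms(2) by (fastforce simp: residual_def)
    then show "c \<in> hd ` S" by force
  qed
qed (use assms(1) in simp)

lemma card_heavy_forks_Diff_Nil:
  assumes "finite S" "0 < m"
  shows "card (heavy_forks m S - {[]}) =
           (\<Sum>c\<in>{c. m \<le> card (residual c S)}. card (heavy_forks m (residual c S)))"
  unfolding heavy_forks_decompose[OF assms]
  by (subst card_UN_disjoint)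
     (auto simp: finite_heavy_residuals[OF assms] finite_heavy_forks[OF finite_residual[OF assms(1)] assms(2)]
        card_image)

lemma Suc_card_heavy_forks_mult_le:
  assumes "finite S" "0 < m" "\<forall>s\<in>S. length s \<le> k" "heavy_forks m S \<noteq> {}"
  shows "(card (heavy_forks m S) + 1) * m \<le> card S"
  using assms
proof (induction k arbitrary: S)
  case 0
  then have "below S (u @ [a]) = {}" for u a
    by (auto simp: below_def dest: prefix_length_le)
  with 0 show ?case by (auto simp: heavy_forks_def)
next
  case (Suc k)
  define H where "H = {c. m \<le> card (residual c S)}"
  have fin_res: "finite (residual c S)" for c
    using finite_residual[OF Suc.prems(1)] .
  have IH: "(card (heavy_forks m (residual c S)) + 1) * m \<le> card (residual c S)" if "c \<in> H" for c
  proof (cases "heavy_forks m (residual c S) = {}")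
    case False
    moreover have "\<forall>s\<in>residual c S. length s \<le> k"
      using Suc.prems(3) by (auto simp: residual_def)
    ultimately show ?thesis using Suc.IH fin_res Suc.prems(2) by blast
  qed (use that in \<open>simp add: H_def\<close>)
  have fin_H: "finite H"
    unfolding H_def using finite_heavy_residuals[OF Suc.prems(1,2)] .
  have card_tail: "card (heavy_forks m S - {[]}) = (\<Sum>c\<in>H. card (heavy_forks m (residual c S)))"
    unfolding H_def using card_heavy_forks_Diff_Nil[OF Suc.prems(1,2)] .
  have "(\<Sum>c\<in>H. card (heavy_forks m (residual c S))) * m + card H * m
          = (\<Sum>c\<in>H. (card (heavy_forks m (residual c S)) + 1) * m)"
    by (simp add: sum.distrib sum_distrib_right)
  also have "\<dots> \<le> (\<Sum>c\<in>H. card (residual c S))"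
    using IH by (rule sum_mono)
  also have "\<dots> \<le> card S"
    using sum_card_residual_le[OF Suc.prems(1)] .
  finally have sum_le: "(\<Sum>c\<in>H. card (heavy_forks m (residual c S))) * m + card H * m \<le> card S" .
  obtain j where "j \<le> card H" "card (heavy_forks m S) + 1 = card (heavy_forks m S - {[]}) + j"
  proof (cases "[] \<in> heavy_forks m S")
    case True
    then obtain a b where "a \<noteq> b" "a \<in> H" "b \<in> H"
      unfolding Nil_in_heavy_forks_iff H_def by blast
    then have "card {a, b} \<le> card H"
      by (intro card_mono[OF fin_H]) auto
    with \<open>a \<noteq> b\<close> have "2 \<le> card H"
      by simp
    moreover have "card (heavy_forks m S) = card (heavy_forks m S - {[]}) + 1"
      using card.remove[OF finite_heavy_forks[OF Suc.prems(1,2)] True] by simp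
    ultimately show ?thesis
      using that[of 2] by simp
  next
    case False
    then have "H \<noteq> {}"
      using Suc.prems(4) heavy_forks_decompose[OF Suc.prems(1,2)] by (auto simp: H_def)
    then have "1 \<le> card H"
      using fin_H by (simp add: Suc_le_eq card_gt_0_iff)
    then show ?thesis
      using that[of 1] False by simp
  qed
  then have "(card (heavy_forks m S) + 1) * m
               \<le> (\<Sum>c\<in>H. card (heavy_forks m (residual c S))) * m + card H * m"
    unfolding card_tail by (simp add: add_mult_distrib)
  with sum_le show ?case
    by linarith
qed

lemma card_heavy_forks_le:
  assumes "finite S" "0 < m"
  shows "card (heavy_forks m S) * m \<le> card S"
proof (cases "heavy_forks m S = {}")
  case False
  obtain k where "\<forall>s\<in>S. length s \<le> k"
    using assms(1) by (metis finite_imageI finite_nat_set_iff_bounded_le image_eqI)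
  then show ?thesis
    using Suc_card_heavy_forks_mult_le[OF assms] False by fastforce
qed simp

lemma finite_psufs: "finite (psufs T)"
  by (simp add: psufs_def)

lemma card_psufs_le: "card (psufs T) \<le> length T"
  unfolding psufs_def using card_image_le[of "{1..length T}" "psuf T"] by simp

lemma PSTree_nodes_subset: "PSTree_nodes T \<subseteq> {[]} \<union> psufs T \<union> heavy_forks 1 (psufs T)"
proof -
  have "1 \<le> card (below (psufs T) v)" if "\<exists>s\<in>psufs T. prefix v s" for v
    using that finite_below[OF finite_psufs, of T v]
    by (auto simp: Suc_le_eq card_gt_0_iff below_def)
  then show ?thesis
    unfolding PSTree_nodes_def heavy_forks_def by blast
qed

lemma card_PSTree_nodes_le: "card (PSTree_nodes T) \<le> 1 + 2 * length T"
proof -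
  have "card (PSTree_nodes T) \<le> card ({[]} \<union> psufs T \<union> heavy_forks 1 (psufs T))"
    by (rule card_mono[OF _ PSTree_nodes_subset]) (simp add: finite_psufs finite_heavy_forks)
  also have "\<dots> \<le> card ({[]} \<union> psufs T) + card (heavy_forks 1 (psufs T))"
    by (rule card_Un_le)
  also have "\<dots> \<le> 1 + card (psufs T) + card (heavy_forks 1 (psufs T))"
    using card_Un_le[of "{[]}" "psufs T"] by simp
  also have "\<dots> \<le> 1 + 2 * length T"
    using card_heavy_forks_le[OF finite_psufs, of 1 T] card_psufs_le[of T] by simp
  finally show ?thesis .
qed

lemma PSTree_node_prefix_psuf:
  assumes "T \<noteq> []" "w \<in> PSTree_nodes T"
  shows "\<exists>s\<in>psufs T. prefix w s"
proof -
  have "psufs T \<noteq> {}"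
    using assms(1) by (simp add: psufs_def Suc_le_eq)
  then show ?thesis
    using assms(2) unfolding PSTree_nodes_def by (auto dest: prefix_snocD simp: strict_prefix_def)
qed

lemma prefix_of_diverging:
  "prefix u (v @ a # r) \<Longrightarrow> prefix u (v @ b # r') \<Longrightarrow> a \<noteq> b \<Longrightarrow> prefix u v"
  by (induction v arbitrary: u) (auto simp: prefix_Cons)

lemma children_diverge:
  assumes "T \<noteq> []" "w1 \<in> children T u" "w2 \<in> children T u" "w1 \<noteq> w2"
  shows "\<exists>a b. a \<noteq> b \<and> prefix (u @ [a]) w1 \<and> prefix (u @ [b]) w2"
proof -
  note c1 = assms(2)[unfolded children_def, simplified]
  note c2 = assms(3)[unfolded children_def, simplified]
  have "w1 \<parallel> w2"
    using c1 c2 assms(4) by (auto simp: strict_prefix_def)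
  then obtain v a r b r' where ab: "a \<noteq> b" "w1 = v @ a # r" "w2 = v @ b # r'"
    using parallel_decomp by blast
  have va: "prefix (v @ [a]) w1" and vb: "prefix (v @ [b]) w2"
    using ab by simp_all
  have "prefix u v"
    using prefix_of_diverging[of u v a r b r'] c1 c2 ab by (simp add: strict_prefix_def)
  moreover have "v \<in> PSTree_nodes T"
  proof -
    obtain s1 s2 where "s1 \<in> psufs T" "prefix w1 s1" "s2 \<in> psufs T" "prefix w2 s2"
      using PSTree_node_prefix_psuf[OF assms(1)] c1 c2 by blast
    then have "prefix (v @ [a]) s1" "prefix (v @ [b]) s2"
      using va vb prefix_order.trans by blast+
    then show ?thesis
      unfolding PSTree_nodes_def using ab(1) \<open>s1 \<in> psufs T\<close> \<open>s2 \<in> psufs T\<close> by blast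
  qed
  moreover have "strict_prefix v w1"
    using ab by (simp add: strict_prefix_def)
  ultimately have "u = v"
    using c1 by (auto simp: strict_prefix_def)
  then show ?thesis
    using ab(1) va vb by blast
qed

lemma leaf_count_le_card_below:
  "prefix v w \<Longrightarrow> leaf_count T w \<le> card (below (psufs T) v)"
  unfolding leaf_count_def below_def
  by (rule card_mono) (auto simp: finite_psufs intro: prefix_order.trans)

lemma branching_pnodes_subset_heavy_forks:
  assumes "T \<noteq> []"
  shows "{u. is_branching_pnode T u} \<subseteq> heavy_forks (max (sigmaT T) (piT T)) (psufs T)"
proof
  fix u assume "u \<in> {u. is_branching_pnode T u}"
  then have "2 \<le> card {w \<in> children T u. is_pnode T w}" (is "2 \<le> card ?A")
    by (simp add: is_branching_pnode_def)
  then have "\<exists>w1\<in>?A. \<exists>w2\<in>?A. w1 \<noteq> w2"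
    using card_le_Suc0_iff_eq[OF card_ge_0_finite, of ?A] by simp
  then obtain w1 w2 where w: "w1 \<in> children T u" "w2 \<in> children T u" "w1 \<noteq> w2"
      "is_pnode T w1" "is_pnode T w2"
    by blast
  obtain a b where "a \<noteq> b" "prefix (u @ [a]) w1" "prefix (u @ [b]) w2"
    using children_diverge[OF assms w(1-3)] by blast
  with w(4,5) show "u \<in> heavy_forks (max (sigmaT T) (piT T)) (psufs T)"
    unfolding heavy_forks_def is_pnode_def
    by (blast intro: le_trans leaf_count_le_card_below)
qed

lemma length_parray: "length (parray T u) = card (set T)"
  by (simp add: parray_def alphabet_def)

lemma card_set_le_sigmaT_add_piT: "card (set T) \<le> sigmaT T + piT T"
proof -
  have "set T = {c \<in> set T. is_static c} \<union> {c \<in> set T. \<not> is_static c}"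
    by auto
  then show ?thesis
    unfolding sigmaT_def piT_def by (metis card_Un_le)
qed

lemma sigmaT_pos:
  assumes "valid_pstring T"
  shows "0 < sigmaT T"
proof -
  have "last T \<in> {c \<in> set T. is_static c}"
    using assms by (simp add: valid_pstring_def)
  then have "{c \<in> set T. is_static c} \<noteq> {}"
    by blast
  then show ?thesis
    unfolding sigmaT_def by (simp add: card_gt_0_iff)
qed

lemma sum_length_parray_le:
  assumes "valid_pstring T"
  shows "(\<Sum>u \<in> {u. is_branching_pnode T u}. length (parray T u)) \<le> 2 * length T"
proof -
  define M where "M = max (sigmaT T) (piT T)"
  have "0 < M"
    using sigmaT_pos[OF assms] by (simp add: M_def)
  have "card {u. is_branching_pnode T u} \<le> card (heavy_forks M (psufs T))"
    using branching_pnodes_subset_heavy_forks assms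
    by (intro card_mono finite_heavy_forks[OF finite_psufs \<open>0 < M\<close>])
       (auto simp: M_def valid_pstring_def)
  then have card_B: "card {u. is_branching_pnode T u} * M \<le> length T"
    using card_heavy_forks_le[OF finite_psufs \<open>0 < M\<close>, of T] card_psufs_le[of T]
    by (meson le_trans mult_le_mono1)
  have "(\<Sum>u \<in> {u. is_branching_pnode T u}. length (parray T u))
          = card {u. is_branching_pnode T u} * card (set T)"
    by (simp add: length_parray)
  also have "\<dots> \<le> card {u. is_branching_pnode T u} * (2 * M)"
    using card_set_le_sigmaT_add_piT[of T] by (intro mult_le_mono2) (simp add: M_def)
  also have "\<dots> \<le> 2 * length T"
    using card_B by simp
  finally show ?thesis .
qed

theorem mainTheorem2:
  shows "\<exists>c::nat. \<forall>T. valid_pstring T \<longrightarrow> PSTray_space T \<le> c * length T"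
proof (intro exI allI impI)
  fix T assume "valid_pstring T"
  then have "1 \<le> length T"
    by (simp add: valid_pstring_def Suc_le_eq)
  have "length (PSA T) = length T" "length (PLCP T) = length T"
    unfolding PSA_def PLCP_def by (simp_all only: length_sort length_upt length_map diff_add_inverse2)
  then have "PSTray_space T \<le> length T + length T + (1 + 2 * length T) + 2 * length T"
    unfolding PSTray_space_def
    using card_PSTree_nodes_le[of T] sum_length_parray_le[OF \<open>valid_pstring T\<close>] by linarith
  with \<open>1 \<le> length T\<close> show "PSTray_space T \<le> 7 * length T"
    by linarith
qed

end
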